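(* If $G$ is a forest without isolated vertices, then $str(G)=|V(G)|+1$.
   Context: For a graph $G$ of order $p$, a numbering of $G$ is a bijection $f:V(G)\to[1,p]$. The strength of a numbering $f$ is $str_f(G)=\max\{f(u)+f(v): uv\in E(G)\}$, and the strength of a graph $G$ with at least one edge is $str(G)=\min\{str_f(G): f \text{ a numbering of } G\}$. *)

theory Defs
  imports Main
begin

definition simple_graph :: "'a set \<Rightarrow> 'a set set \<Rightarrow> bool" where
  "simple_graph V E \<longleftrightarrow> finite V \<and> (\<forall>e\<in>E. e \<subseteq> V \<and> card e = 2)"

definition is_cycle :: "'a set \<Rightarrow> 'a set set \<Rightarrow> 'a list \<Rightarrow> bool" where
  "is_cycle V E cs \<longleftrightarrow> length cs \<ge> 3 \<and> distinct cs \<and> set cs \<subseteq> V \<and>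
     (\<forall>i < length cs. {cs ! i, cs ! ((i + 1) mod length cs)} \<in> E)"

definition forest :: "'a set \<Rightarrow> 'a set set \<Rightarrow> bool" where
  "forest V E \<longleftrightarrow> simple_graph V E \<and> \<not> (\<exists>cs. is_cycle V E cs)"

definition isolated_vertex :: "'a set \<Rightarrow> 'a set set \<Rightarrow> 'a \<Rightarrow> bool" where
  "isolated_vertex V E v \<longleftrightarrow> v \<in> V \<and> (\<forall>e\<in>E. v \<notin> e)"

definition numbering :: "'a set \<Rightarrow> ('a \<Rightarrow> nat) \<Rightarrow> bool" where
  "numbering V f \<longleftrightarrow> bij_betw f V {1..card V}"

definition strength_of :: "'a set set \<Rightarrow> ('a \<Rightarrow> nat) \<Rightarrow> nat" where
  "strength_of E f = Max {f u + f v | u v. {u, v} \<in> E}"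

definition strength :: "'a set \<Rightarrow> 'a set set \<Rightarrow> nat" where
  "strength V E = Min {strength_of E f | f. numbering V f}"

end

theory Submission imports Defs begin

text \<open>The lower bound: the vertex numbered p is not isolated, so some edge has sum at least p + 1.
  The upper bound: every forest has a vertex v of degree at most one. If v is isolated, give it
  the label p and number the rest inductively; if v is a leaf with neighbour u, give v the label p
  and u the label 1 and number the remaining vertices inductively with labels 2 .. p - 1. Every
  edge sum is then at most p + 1. A vertex of degree at most one is the first vertex of a longest
  path: all its neighbours lie on the path, and a neighbour other than the second vertex would
  close a cycle.\<close>

definition is_path :: "'a set \<Rightarrow> 'a set set \<Rightarrow> 'a list \<Rightarrow> bool" where
  "is_path V E xs \<longleftrightarrow> xs \<noteq> [] \<and> distinct xs \<and> set xs \<subseteq> V \<and>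
     (\<forall>i. Suc i < length xs \<longrightarrow> {xs ! i, xs ! Suc i} \<in> E)"

lemma simple_graph_edge_neq:
  assumes "simple_graph V E" "{a, b} \<in> E"
  shows "a \<noteq> b"
  using assms unfolding simple_graph_def by fastforce

lemma simple_graph_edgeE:
  assumes "simple_graph V E" "e \<in> E" "x \<in> e"
  obtains y where "y \<noteq> x" "y \<in> V" "e = {x, y}"
proof -
  have "card e = 2" "e \<subseteq> V" using assms unfolding simple_graph_def by auto
  then obtain a b where "a \<noteq> b" "e = {a, b}" by (meson card_2_iff)
  then show ?thesis using that assms(3) \<open>e \<subseteq> V\<close> by (fastforce simp: insert_commute)
qed

lemma simple_graph_edge_sums_finite:
  assumes "simple_graph V E"
  shows "finite {f u + f v | u v. {u, v} \<in> E}"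
proof -
  have "{f u + f v | u v. {u, v} \<in> E} \<subseteq> (\<lambda>(u, v). f u + f v) ` (V \<times> V)"
    using assms unfolding simple_graph_def by force
  moreover have "finite V" using assms unfolding simple_graph_def by simp
  ultimately show ?thesis by (meson finite_SigmaI finite_imageI finite_subset)
qed

lemma forest_subgraph:
  assumes "forest V E" "V' \<subseteq> V" "E' \<subseteq> E" "\<forall>e\<in>E'. e \<subseteq> V'"
  shows "forest V' E'"
proof -
  have "finite V'" using assms(1,2) finite_subset unfolding forest_def simple_graph_def by blast
  moreover have "\<forall>e\<in>E'. e \<subseteq> V' \<and> card e = 2"
    using assms unfolding forest_def simple_graph_def by blast
  moreover have "\<not> (\<exists>cs. is_cycle V' E' cs)"
    using assms unfolding forest_def is_cycle_def by blast
  ultimately show ?thesis unfolding forest_def simple_graph_def by blast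
qed

lemma is_path_chord_cycle:
  assumes "is_path V E xs" "2 \<le> m" "m < length xs" "{xs ! 0, xs ! m} \<in> E"
  shows "is_cycle V E (take (Suc m) xs)"
  unfolding is_cycle_def
proof (intro conjI allI impI)
  let ?cs = "take (Suc m) xs"
  have len: "length ?cs = Suc m" using assms(3) by simp
  show "3 \<le> length ?cs" using len assms(2) by simp
  show "distinct ?cs" "set ?cs \<subseteq> V"
    using assms(1) unfolding is_path_def by (auto dest: in_set_takeD)
  fix i assume "i < length ?cs"
  then consider "i = m" | "i < m" using len by linarith
  then show "{?cs ! i, ?cs ! ((i + 1) mod length ?cs)} \<in> E"
  proof cases
    case 1
    then show ?thesis using assms(4) len by (simp add: insert_commute)
  next
    case 2
    then show ?thesis using assms(1,3) len unfolding is_path_def by simp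
  qed
qed

lemma ex_longest_path:
  assumes "finite V" "w \<in> V"
  obtains xs where "is_path V E xs" "\<And>ys. is_path V E ys \<Longrightarrow> length ys \<le> length xs"
proof -
  have "is_path V E [w]" using assms(2) unfolding is_path_def by simp
  moreover have "length ys < Suc (card V)" if "is_path V E ys" for ys
    using that card_mono[OF assms(1)] distinct_card unfolding is_path_def
    by (metis less_Suc_eq_le)
  ultimately show ?thesis using that ex_has_greatest_nat[of "is_path V E" "[w]" length] by blast
qed

lemma longest_path_start_neighbour:
  assumes SG: "simple_graph V E" and P: "is_path V E xs"
    and longest: "\<And>ys. is_path V E ys \<Longrightarrow> length ys \<le> length xs"
    and y: "{xs ! 0, y} \<in> E"
  obtains j where "0 < j" "j < length xs" "y = xs ! j"
proof -
  have "y \<in> set xs"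
  proof (rule ccontr)
    assume "y \<notin> set xs"
    moreover have "y \<in> V" using y SG unfolding simple_graph_def by auto
    ultimately have "is_path V E (y # xs)"
      using P y unfolding is_path_def
      by (auto simp: insert_commute nth_Cons split: nat.split)
    then show False using longest[of "y # xs"] by simp
  qed
  moreover have "y \<noteq> xs ! 0" using simple_graph_edge_neq[OF SG y] by simp
  ultimately show ?thesis using that by (metis gr0I in_set_conv_nth)
qed

lemma forest_ex_degree_le_one:
  assumes F: "forest V E" and "V \<noteq> {}"
  obtains v u where "v \<in> V" "\<forall>e\<in>E. v \<in> e \<longrightarrow> e = {v, u}"
proof -
  have SG: "simple_graph V E" and acyclic: "\<And>cs. \<not> is_cycle V E cs"
    using F unfolding forest_def by auto
  obtain w where "w \<in> V" using \<open>V \<noteq> {}\<close> by blast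
  then obtain xs where P: "is_path V E xs"
    and longest: "\<And>ys. is_path V E ys \<Longrightarrow> length ys \<le> length xs"
    using ex_longest_path[of V w E] SG unfolding simple_graph_def by blast
  have "e = {xs ! 0, xs ! 1}" if e: "e \<in> E" "xs ! 0 \<in> e" for e
  proof -
    obtain y where e_eq: "e = {xs ! 0, y}" using simple_graph_edgeE[OF SG e] by blast
    obtain j where j: "0 < j" "j < length xs" "y = xs ! j"
      using longest_path_start_neighbour[OF SG P longest] e e_eq by blast
    have "\<not> 2 \<le> j"
      using is_path_chord_cycle[OF P] acyclic e e_eq j by metis
    then have "j = 1" using j by linarith
    then show ?thesis using e_eq j by simp
  qed
  moreover have "xs ! 0 \<in> V" using P unfolding is_path_def by auto
  ultimately show ?thesis using that by blast
qed

lemma bij_betw_upd_top: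
  assumes "bij_betw g V {1..n}" "v \<notin> V"
  shows "bij_betw (g(v := Suc n)) (insert v V) {1..Suc n}"
proof -
  have "bij_betw (g(v := Suc n)) V {1..n}"
    by (rule iffD2[OF bij_betw_cong assms(1)]) (use assms(2) in auto)
  then have "bij_betw (g(v := Suc n)) (V \<union> {v}) ({1..n} \<union> {Suc n})"
    using notIn_Un_bij_betw[of v V "g(v := Suc n)"] assms(2) by simp
  then show ?thesis by (simp add: atLeastAtMostSuc_conv)
qed

lemma bij_betw_shift_upd_ends:
  assumes "bij_betw g V {1..n}" "u \<notin> V" "v \<notin> V" "u \<noteq> v"
  shows "bij_betw ((Suc \<circ> g)(u := 1, v := n + 2)) (insert u (insert v V)) {1..n + 2}"
proof -
  let ?f = "(Suc \<circ> g)(u := 1, v := n + 2)"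
  have "bij_betw Suc {1..n} {2..Suc n}"
    by (simp add: bij_betw_def image_Suc_atLeastAtMost)
  then have shifted: "bij_betw (Suc \<circ> g) V {2..Suc n}"
    using assms(1) bij_betw_trans by blast
  have "bij_betw ?f V {2..Suc n}"
    by (rule iffD2[OF bij_betw_cong shifted]) (use assms(2,3) in auto)
  then have "bij_betw ?f (V \<union> {v}) ({2..Suc n} \<union> {n + 2})"
    using notIn_Un_bij_betw[of v V ?f] assms(3,4) by simp
  then have "bij_betw ?f (V \<union> {v} \<union> {u}) ({2..Suc n} \<union> {n + 2} \<union> {1})"
    using notIn_Un_bij_betw[of u "V \<union> {v}" ?f] assms(2,4) by simp
  moreover have "{2..Suc n} \<union> {n + 2} \<union> {1} = {1..n + 2}" by auto
  ultimately show ?thesis by (simp add: insert_commute)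
qed

lemma numbering_extend_isolated:
  assumes g: "numbering (V - {v}) g" and "finite V" "v \<in> V"
    and isolated: "\<forall>e\<in>E. v \<notin> e"
    and g_sums: "\<And>a b. {a, b} \<in> E \<Longrightarrow> g a + g b \<le> card (V - {v}) + 1"
  obtains f where "numbering V f" "\<And>a b. {a, b} \<in> E \<Longrightarrow> f a + f b \<le> card V + 1"
proof -
  let ?f = "g(v := card V)"
  have card: "card V = Suc (card (V - {v}))" using assms(2,3) by (metis card_Suc_Diff1)
  have "bij_betw (g(v := Suc (card (V - {v})))) (insert v (V - {v})) {1..Suc (card (V - {v}))}"
    using g unfolding numbering_def by (rule bij_betw_upd_top) simp
  then have "numbering V ?f"
    unfolding numbering_def card[symmetric] insert_Diff[OF assms(3)] .
  moreover have "?f a + ?f b \<le> card V + 1" if ab: "{a, b} \<in> E" for a b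
  proof -
    have "a \<noteq> v" "b \<noteq> v" using isolated ab by auto
    then show ?thesis using g_sums[OF ab] card by simp
  qed
  ultimately show ?thesis by (rule that)
qed

lemma numbering_extend_leaf:
  assumes g: "numbering (V - {u, v}) g" and "finite V" "u \<in> V" "v \<in> V" "u \<noteq> v"
    and edges: "\<forall>e\<in>E. e \<subseteq> V"
    and leaf: "\<forall>e\<in>E. v \<in> e \<longrightarrow> e = {v, u}"
    and g_sums: "\<And>a b. {a, b} \<in> E \<Longrightarrow> u \<notin> {a, b} \<Longrightarrow> v \<notin> {a, b} \<Longrightarrow>
      g a + g b \<le> card (V - {u, v}) + 1"
  obtains f where "numbering V f" "\<And>a b. {a, b} \<in> E \<Longrightarrow> f a + f b \<le> card V + 1"
proof -
  define W where "W = V - {u, v}"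
  let ?n = "card W"
  let ?f = "(Suc \<circ> g)(u := 1, v := ?n + 2)"
  have V_eq: "V = insert u (insert v W)" and "u \<notin> W" "v \<notin> W"
    using assms(3,4) unfolding W_def by blast+
  have card: "card V = ?n + 2"
    using assms(2,5) \<open>u \<notin> W\<close> \<open>v \<notin> W\<close> by (simp add: V_eq)
  have g_le: "g x \<le> ?n" if "x \<in> W" for x
    using g that unfolding numbering_def W_def by (auto dest: bij_betwE)
  have "numbering V ?f"
    using bij_betw_shift_upd_ends[of g W ?n u v] g assms(5) \<open>u \<notin> W\<close> \<open>v \<notin> W\<close> card
    unfolding numbering_def W_def[symmetric] V_eq[symmetric] by simp
  moreover have "?f a + ?f b \<le> card V + 1" if ab: "{a, b} \<in> E" for a b
  proof -
    have "a \<in> insert u (insert v W)" "b \<in> insert u (insert v W)"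
      using edges ab unfolding V_eq[symmetric] by auto
    moreover have "a = v \<or> b = v \<Longrightarrow> {a, b} = {v, u}" using leaf ab by auto
    ultimately consider "{a, b} = {u, v}" | "a = u" "b \<in> insert u W" | "b = u" "a \<in> insert u W"
      | "a \<in> W" "b \<in> W"
      by (metis insert_commute insertE)
    then show ?thesis
    proof cases
      case 1
      then show ?thesis using assms(5) card by (auto simp: doubleton_eq_iff)
    next
      case 2
      then show ?thesis using assms(5) \<open>u \<notin> W\<close> \<open>v \<notin> W\<close> card by (auto dest: g_le)
    next
      case 3
      then show ?thesis using assms(5) \<open>u \<notin> W\<close> \<open>v \<notin> W\<close> card by (auto dest: g_le)
    next
      case 4
      then have "u \<notin> {a, b}" "v \<notin> {a, b}" "a \<noteq> u" "b \<noteq> u" "a \<noteq> v" "b \<noteq> v"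
        using \<open>u \<notin> W\<close> \<open>v \<notin> W\<close> by auto
      then show ?thesis using g_sums[OF ab] card unfolding W_def by simp
    qed
  qed
  ultimately show ?thesis by (rule that)
qed

lemma forest_numbering_edge_sums_le:
  assumes "forest V E"
  obtains f where "numbering V f" "\<And>u v. {u, v} \<in> E \<Longrightarrow> f u + f v \<le> card V + 1"
  using assms
proof (induction "card V" arbitrary: V E thesis rule: less_induct)
  case less
  have SG: "simple_graph V E" using less.prems(2) unfolding forest_def by simp
  have fin: "finite V" and edges: "\<forall>e\<in>E. e \<subseteq> V"
    using SG unfolding simple_graph_def by auto
  show ?case
  proof (cases "V = {}")
    case True
    then have "E = {}" using SG unfolding simple_graph_def by fastforce
    then show ?thesis
      using less.prems(1)[of "\<lambda>_. 0"] True by (simp add: numbering_def bij_betw_def)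
  next
    case False
    then obtain v u where v: "v \<in> V" and leaf: "\<forall>e\<in>E. v \<in> e \<longrightarrow> e = {v, u}"
      using forest_ex_degree_le_one less.prems(2) by metis
    show ?thesis
    proof (cases "{v, u} \<in> E")
      case False
      then have isolated: "\<forall>e\<in>E. v \<notin> e" using leaf by auto
      have forest: "forest (V - {v}) E"
        by (rule forest_subgraph[OF less.prems(2)]) (use edges isolated in auto)
      obtain g where g: "numbering (V - {v}) g"
        and g_sums: "\<And>a b. {a, b} \<in> E \<Longrightarrow> g a + g b \<le> card (V - {v}) + 1"
        using less.hyps[OF card_Diff1_less[OF fin v] _ forest] by blast
      show ?thesis
        by (rule numbering_extend_isolated[OF g fin v isolated g_sums less.prems(1)])
    next
      case True
      have "u \<noteq> v" using simple_graph_edge_neq[OF SG True] by blast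
      have u: "u \<in> V" using edges True by blast
      have forest: "forest (V - {u, v}) {e \<in> E. u \<notin> e \<and> v \<notin> e}"
        by (rule forest_subgraph[OF less.prems(2)]) (use edges in auto)
      have smaller: "card (V - {u, v}) < card V"
        by (rule psubset_card_mono[OF fin]) (use u in blast)
      obtain g where g: "numbering (V - {u, v}) g"
        and g_sums: "\<And>a b. {a, b} \<in> {e \<in> E. u \<notin> e \<and> v \<notin> e} \<Longrightarrow>
          g a + g b \<le> card (V - {u, v}) + 1"
        using less.hyps[OF smaller _ forest] by blast
      show ?thesis
        by (rule numbering_extend_leaf[OF g fin u v \<open>u \<noteq> v\<close> edges leaf _ less.prems(1)])
          (use g_sums in simp)
    qed
  qed
qed

lemma strength_of_ge_card_Suc:
  assumes "simple_graph V E" "\<forall>v\<in>V. \<not> isolated_vertex V E v" "V \<noteq> {}" "numbering V f"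
  shows "card V + 1 \<le> strength_of E f"
proof -
  have bij: "bij_betw f V {1..card V}" using assms(4) unfolding numbering_def .
  have "card V \<in> f ` V"
    using bij_betw_imp_surj_on[OF bij] assms(1,3) unfolding simple_graph_def
    by (simp add: Suc_leI card_gt_0_iff)
  then obtain w where w: "w \<in> V" "f w = card V" by auto
  then obtain e where "e \<in> E" "w \<in> e" using assms(2) unfolding isolated_vertex_def by blast
  then obtain y where y: "y \<in> V" "{w, y} \<in> E" using simple_graph_edgeE[OF assms(1)] by metis
  have "1 \<le> f y" using bij_betwE[OF bij] y(1) by auto
  moreover have "f w + f y \<le> strength_of E f"
    unfolding strength_of_def using y(2)
    by (intro Max_ge[OF simple_graph_edge_sums_finite[OF assms(1)]]) blast
  ultimately show ?thesis using w by simp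
qed

lemma strength_of_le:
  assumes "simple_graph V E" "E \<noteq> {}" "\<And>u v. {u, v} \<in> E \<Longrightarrow> f u + f v \<le> b"
  shows "strength_of E f \<le> b"
proof -
  obtain x y where "{x, y} \<in> E"
    using assms(1,2) unfolding simple_graph_def by (metis card_2_iff ex_in_conv)
  then have "{f u + f v | u v. {u, v} \<in> E} \<noteq> {}" by blast
  then show ?thesis
    unfolding strength_of_def using assms(3)
    by (auto simp: Max_le_iff[OF simple_graph_edge_sums_finite[OF assms(1)]])
qed

lemma strength_eqI:
  assumes SG: "simple_graph V E" and "E \<noteq> {}"
    and lower: "\<And>f. numbering V f \<Longrightarrow> b \<le> strength_of E f"
    and attained: "numbering V f\<^sub>0" "strength_of E f\<^sub>0 \<le> b"
  shows "strength V E = b"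
proof -
  let ?S = "{strength_of E f | f. numbering V f}"
  have "strength_of E f \<le> 2 * card V" if "numbering V f" for f
  proof (rule strength_of_le[OF SG \<open>E \<noteq> {}\<close>])
    fix u v assume "{u, v} \<in> E"
    then have "u \<in> V" "v \<in> V" using SG unfolding simple_graph_def by auto
    then have "f u \<le> card V" "f v \<le> card V"
      using that unfolding numbering_def by (auto dest: bij_betwE)
    then show "f u + f v \<le> 2 * card V" by simp
  qed
  then have "finite ?S" by (intro finite_subset[of ?S "{..2 * card V}"]) auto
  moreover have "b \<in> ?S" using attained lower[OF attained(1)] le_antisym by fastforce
  ultimately show ?thesis unfolding strength_def using lower by (intro Min_eqI) auto
qed

theorem mainTheorem3:
  fixes V :: "'a set" and E :: "'a set set"
  assumes "forest V E" and "E \<noteq> {}"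
    and "\<forall>v\<in>V. \<not> isolated_vertex V E v"
  shows "strength V E = card V + 1"
proof -
  have SG: "simple_graph V E" using assms(1) unfolding forest_def by simp
  have "V \<noteq> {}" using assms(2) SG unfolding simple_graph_def by fastforce
  obtain f where "numbering V f" "\<And>u v. {u, v} \<in> E \<Longrightarrow> f u + f v \<le> card V + 1"
    using forest_numbering_edge_sums_le[OF assms(1)] by blast
  then show ?thesis
    using strength_eqI[OF SG assms(2)] strength_of_le[OF SG assms(2)]
      strength_of_ge_card_Suc[OF SG assms(3) \<open>V \<noteq> {}\<close>] by blast
qed

end
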